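(* Let $\mathbb H(t)=4\arctan(e^t)$. If $\Phi\in C^\infty(\mathbb{R}^2;\mathbb{C}^2)$ is parallel with respect to $(\mathbb H(x),i)$ and either $e^{-x/2}\Phi(x,y)\in L^\infty(\mathbb{R}^2)$ or $e^{x/2}\Phi(x,y)\in L^\infty(\mathbb{R}^2)$, then $\Phi$ is a constant complex multiple of a column of $\Phi^{\mathbb H}(x,y,i)$ (the two columns of $\Phi^{\mathbb H}(\cdot,\cdot,i)$ being linearly dependent).
   Context: Pauli matrices $\sigma_1=\begin{pmatrix}0&1\\1&0\end{pmatrix}$, $\sigma_2=\begin{pmatrix}0&-i\\ i&0\end{pmatrix}$, $\sigma_3=\begin{pmatrix}1&0\\0&-1\end{pmatrix}$; $K(\lambda)=\lambda-\lambda^{-1}$, $J(\lambda)=\lambda+\lambda^{-1}$. For $u\in C^\infty(\mathbb{R}^2)$, $\lambda\ne0$: $A=\frac i4\big((\lambda-\lambda^{-1}\cos u)\sigma_3-(\partial_xu-i\partial_yu)\sigma_2-\lambda^{-1}(\sin u)\sigma_1\big)$, $B=\frac14\big(-(\lambda+\lambda^{-1}\cos u)\sigma_3+(\partial_xu-i\partial_yu)\sigma_2-\lambda^{-1}(\sin u)\sigma_1\big)$; $\Phi$ is parallel with respect to $(u,\lambda)$ if $\partial_x\Phi=A\Phi$, $\partial_y\Phi=B\Phi$. $\Phi^0(x,y,\lambda)=\mathrm{diag}(e^{\frac i4K(\lambda)x-\frac14J(\lambda)y},e^{-\frac i4K(\lambda)x+\frac14J(\lambda)y})$ and, for $\lambda\ne0,-i$,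 $\Phi^{\mathbb H}=\Phi^0+\frac{i}{\lambda+i}\big((\tanh x)\sigma_3-(\operatorname{sech}x)\sigma_1-\mathrm{Id}\big)\Phi^0$. *)

theory Defs
  imports "HOL-Analysis.Analysis"
begin

definition mat2 :: "complex \<Rightarrow> complex \<Rightarrow> complex \<Rightarrow> complex \<Rightarrow> complex^2^2" where
  "mat2 a b c d = (\<chi> i j. if i = 1 then (if j = 1 then a else b) else (if j = 1 then c else d))"

definition sigma1 :: "complex^2^2" where "sigma1 = mat2 0 1 1 0"
definition sigma2 :: "complex^2^2" where "sigma2 = mat2 0 (-\<i>) \<i> 0"
definition sigma3 :: "complex^2^2" where "sigma3 = mat2 1 0 0 (-1)"
definition Id2 :: "complex^2^2" where "Id2 = mat2 1 0 0 1"

definition Kf :: "complex \<Rightarrow> complex" where "Kf l = l - inverse l"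
definition Jf :: "complex \<Rightarrow> complex" where "Jf l = l + inverse l"

definition dx :: "(real \<times> real \<Rightarrow> real) \<Rightarrow> real \<Rightarrow> real \<Rightarrow> real" where
  "dx u x y = deriv (\<lambda>t. u (t, y)) x"
definition dy :: "(real \<times> real \<Rightarrow> real) \<Rightarrow> real \<Rightarrow> real \<Rightarrow> real" where
  "dy u x y = deriv (\<lambda>t. u (x, t)) y"

definition Amat :: "(real \<times> real \<Rightarrow> real) \<Rightarrow> complex \<Rightarrow> real \<Rightarrow> real \<Rightarrow> complex^2^2" where
  "Amat u l x y =
     (\<chi> a b. (\<i> / 4) * (((l - inverse l * cos (u (x, y))) * sigma3 $ a $ b)
        - (complex_of_real (dx u x y) - \<i> * complex_of_real (dy u x y)) * sigma2 $ a $ b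
        - inverse l * sin (u (x, y)) * sigma1 $ a $ b))"

definition Bmat :: "(real \<times> real \<Rightarrow> real) \<Rightarrow> complex \<Rightarrow> real \<Rightarrow> real \<Rightarrow> complex^2^2" where
  "Bmat u l x y =
     (\<chi> a b. (1 / 4) * (- (l + inverse l * cos (u (x, y))) * sigma3 $ a $ b
        + (complex_of_real (dx u x y) - \<i> * complex_of_real (dy u x y)) * sigma2 $ a $ b
        - inverse l * sin (u (x, y)) * sigma1 $ a $ b))"

definition parallel :: "(real \<times> real \<Rightarrow> complex^2) \<Rightarrow> (real \<times> real \<Rightarrow> real) \<Rightarrow> complex \<Rightarrow> bool" where
  "parallel Phi u l \<longleftrightarrow>
     (\<forall>x y. ((\<lambda>t. Phi (t, y)) has_vector_derivative (Amat u l x y *v Phi (x, y))) (at x)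
          \<and> ((\<lambda>t. Phi (x, t)) has_vector_derivative (Bmat u l x y *v Phi (x, y))) (at y))"

fun Ck :: "nat \<Rightarrow> (real \<times> real \<Rightarrow> 'a::real_normed_vector) \<Rightarrow> bool" where
  "Ck 0 f = continuous_on UNIV f"
| "Ck (Suc k) f = ((\<forall>p. f differentiable (at p))
      \<and> Ck k (\<lambda>p. frechet_derivative f (at p) (1, 0))
      \<and> Ck k (\<lambda>p. frechet_derivative f (at p) (0, 1)))"

definition smooth :: "(real \<times> real \<Rightarrow> 'a::real_normed_vector) \<Rightarrow> bool" where
  "smooth f \<longleftrightarrow> (\<forall>k. Ck k f)"

definition Phi0 :: "real \<Rightarrow> real \<Rightarrow> complex \<Rightarrow> complex^2^2" where
  "Phi0 x y l = mat2 (exp (\<i> / 4 * Kf l * x - 1 / 4 * Jf l * y)) 0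
                     0 (exp (- \<i> / 4 * Kf l * x + 1 / 4 * Jf l * y))"

definition PhiH :: "real \<Rightarrow> real \<Rightarrow> complex \<Rightarrow> complex^2^2" where
  "PhiH x y l = Phi0 x y l +
     (\<chi> a b. (\<i> / (l + \<i>)) *
        (((\<chi> c d. complex_of_real (tanh x) * sigma3 $ c $ d
                    - complex_of_real (1 / cosh x) * sigma1 $ c $ d - Id2 $ c $ d))
         ** Phi0 x y l) $ a $ b)"

definition Hsol :: "real \<Rightarrow> real" where "Hsol t = 4 * arctan (exp t)"

end

(* At \<lambda> = \<i> the y-matrix B(x) of the Lax pair of the kink does not depend on y and is
   nilpotent of rank one. Along a vertical line, \<Phi>' = B\<Phi> therefore gives
   \<Phi>(x, y) = \<Phi>(x, 0) + y B\<Phi>(x, 0). Either weighted L\<^sup>\<infinity> bound makes the continuous \<Phi>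
   bounded on every vertical line, so B\<Phi>(x, 0) = 0 and \<Phi> does not depend on y. The kernel of B
   ties the two components together, and the x-equation then becomes a scalar linear ODE whose
   solutions are the multiples of exp(x/2) / (1 + exp(2x)), i.e. of the second column of \<Phi>\<^sup>H(x, y, \<i>);
   the first column is its negative. *)

theory Submission
  imports Defs
begin

lemma le_if_AE_le_continuous:
  fixes f :: "'a::euclidean_space \<Rightarrow> real"
  assumes "continuous_on UNIV f" and "AE p in lborel. f p \<le> C"
  shows "f p \<le> C"
proof (rule ccontr)
  assume "\<not> f p \<le> C"
  then have "p \<in> {q. C < f q}" by simp
  moreover have "open {q. C < f q}"
    using assms(1) by (intro open_Collect_less) (auto intro: continuous_intros)
  ultimately obtain r where r: "r > 0" "ball p r \<subseteq> {q. C < f q}"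
    by (meson openE)
  from assms(2) obtain N where N: "{q \<in> space lborel. \<not> f q \<le> C} \<subseteq> N" "emeasure lborel N = 0" "N \<in> sets lborel"
    by (rule AE_E)
  have "emeasure lborel (ball p r) \<le> emeasure lborel N"
    using r(2) N by (intro emeasure_mono) force+
  with N(2) have "measure lborel (ball p r) = 0" by (simp add: measure_def)
  with content_ball_pos[OF r(1), of p] show False by simp
qed

lemma bounded_on_vertical_lines_if_AE_weighted_bound:
  fixes Phi :: "real \<times> real \<Rightarrow> 'a::real_normed_vector"
  assumes "continuous_on UNIV Phi" and "AE p in lborel. norm (exp (s * fst p) *\<^sub>R Phi p) \<le> C"
  shows "\<exists>M. \<forall>y. norm (Phi (x, y)) \<le> M"
proof -
  have "exp (s * x) * norm (Phi (x, y)) \<le> C" for y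
    using le_if_AE_le_continuous[OF _ assms(2), where p = "(x, y)"] assms(1)
    by (simp add: continuous_intros)
  then have "norm (Phi (x, y)) \<le> C / exp (s * x)" for y
    by (simp add: pos_le_divide_eq mult.commute)
  then show ?thesis by blast
qed

lemma bounded_line_imp_direction_zero:
  fixes a w :: "'a::real_normed_vector"
  assumes "\<And>t. norm (a + t *\<^sub>R w) \<le> M"
  shows "w = 0"
proof (rule ccontr)
  assume "w \<noteq> 0"
  define t where "t = (M + norm a + 1) / norm w"
  have "M \<ge> 0" using order_trans[OF norm_ge_zero assms[of 0]] by simp
  then have "norm (t *\<^sub>R w) = M + norm a + 1"
    using \<open>w \<noteq> 0\<close> by (simp add: t_def)
  moreover have "norm (t *\<^sub>R w) \<le> norm (a + t *\<^sub>R w) + norm a"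
    using norm_triangle_ineq4[of "a + t *\<^sub>R w" a] by simp
  ultimately show False using assms[of t] by linarith
qed

lemma bounded_solution_of_nilpotent_ODE:
  fixes v :: "real \<Rightarrow> 'a::real_normed_vector"
  assumes L: "bounded_linear L" and nil: "\<And>z. L (L z) = 0"
    and v': "\<And>t. (v has_vector_derivative L (v t)) (at t)"
    and bounded: "\<And>t. norm (v t) \<le> M"
  shows "v t = v 0" and "L (v 0) = 0"
proof -
  have "((\<lambda>t. L (v t)) has_vector_derivative 0) (at t)" for t
    using bounded_linear.has_vector_derivative[OF L v'[of t]] by (simp add: nil)
  then obtain w where w: "\<And>t. L (v t) = w"
    using has_vector_derivative_zero_constant[of UNIV "\<lambda>t. L (v t)"] by auto
  have "((\<lambda>t. v t - t *\<^sub>R w) has_vector_derivative L (v t) - (t *\<^sub>R 0 + 1 *\<^sub>R w)) (at t)" for t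
    by (intro has_vector_derivative_diff v' has_vector_derivative_scaleR DERIV_ident has_vector_derivative_const)
  then have "((\<lambda>t. v t - t *\<^sub>R w) has_vector_derivative 0) (at t)" for t
    by (simp add: w)
  then obtain c where c: "\<And>t. v t - t *\<^sub>R w = c"
    using has_vector_derivative_zero_constant[of UNIV "\<lambda>t. v t - t *\<^sub>R w"] by auto
  have "v t = v 0 + t *\<^sub>R w" for t
    using c[of t] c[of 0] by (simp add: algebra_simps)
  moreover from this have "w = 0"
    using bounded by (intro bounded_line_imp_direction_zero[where a = "v 0" and M = M]) metis
  ultimately show "v t = v 0" and "L (v 0) = 0"
    using w by simp_all
qed

lemma solution_of_scalar_linear_ODE:
  fixes f :: "real \<Rightarrow> 'a::real_normed_vector"
  assumes f': "\<And>s. (f has_vector_derivative k s *\<^sub>R f s) (at s)"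
    and E': "\<And>s. (E has_real_derivative k s * E s) (at s)"
    and E_nonzero: "\<And>s. E s \<noteq> 0"
  shows "f s = (E s / E 0) *\<^sub>R f 0"
proof -
  have deriv_zero: "((\<lambda>s. inverse (E s) *\<^sub>R f s) has_vector_derivative 0) (at s)" for s
  proof -
    have "((\<lambda>s. inverse (E s)) has_real_derivative - k s * inverse (E s)) (at s)"
      by (rule DERIV_cong[OF DERIV_inverse_fun[OF E' E_nonzero]]) (use E_nonzero[of s] in simp)
    from has_vector_derivative_scaleR[OF this f'[of s]]
    have "((\<lambda>s. inverse (E s) *\<^sub>R f s) has_vector_derivative
            inverse (E s) *\<^sub>R (k s *\<^sub>R f s) + (- k s * inverse (E s)) *\<^sub>R f s) (at s)" .
    moreover have "inverse (E s) *\<^sub>R (k s *\<^sub>R f s) + (- k s * inverse (E s)) *\<^sub>R f s = 0"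
      unfolding scaleR_scaleR scaleR_add_left[symmetric] by simp
    ultimately show ?thesis by (simp only:)
  qed
  then obtain c where "\<And>s. inverse (E s) *\<^sub>R f s = c"
    using has_vector_derivative_zero_constant[of UNIV, OF _ deriv_zero] by auto
  from this[of s] this[of 0]
  have const: "inverse (E s) *\<^sub>R f s = inverse (E 0) *\<^sub>R f 0" by simp
  have "f s = E s *\<^sub>R (inverse (E s) *\<^sub>R f s)"
    using E_nonzero[of s] by simp
  also have "\<dots> = (E s / E 0) *\<^sub>R f 0"
    unfolding const by (simp add: divide_inverse)
  finally show ?thesis .
qed

abbreviation kink :: "real \<times> real \<Rightarrow> real" where
  "kink \<equiv> \<lambda>(x, y). Hsol x"

lemma one_plus_exp_sq_pos: "0 < 1 + exp (x::real) ^ 2"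
  by (simp add: add_pos_nonneg)

lemma cos_double_arctan: "cos (2 * arctan q) = (1 - q ^ 2) / (1 + q ^ 2)"
  and sin_double_arctan: "sin (2 * arctan q) = 2 * q / (1 + q ^ 2)"
proof -
  have "sqrt (1 + q ^ 2) ^ 2 = 1 + q ^ 2" by (simp add: add_pos_nonneg)
  then show "cos (2 * arctan q) = (1 - q ^ 2) / (1 + q ^ 2)" and "sin (2 * arctan q) = 2 * q / (1 + q ^ 2)"
    by (simp_all add: cos_double sin_double cos_arctan sin_arctan power_divide diff_divide_distrib)
qed

lemma cos_Hsol: "cos (Hsol x) = ((1 - exp x ^ 2) ^ 2 - 4 * exp x ^ 2) / (1 + exp x ^ 2) ^ 2"
proof -
  have "cos (Hsol x) = cos (2 * arctan (exp x)) ^ 2 - sin (2 * arctan (exp x)) ^ 2"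
    using cos_double[of "2 * arctan (exp x)"] by (simp add: Hsol_def)
  then show ?thesis
    by (simp only: cos_double_arctan sin_double_arctan power_divide)
      (simp add: diff_divide_distrib power_mult_distrib)
qed

lemma sin_Hsol: "sin (Hsol x) = 4 * exp x * (1 - exp x ^ 2) / (1 + exp x ^ 2) ^ 2"
proof -
  have "sin (Hsol x) = 2 * sin (2 * arctan (exp x)) * cos (2 * arctan (exp x))"
    using sin_double[of "2 * arctan (exp x)"] by (simp add: Hsol_def)
  then show ?thesis
    using one_plus_exp_sq_pos[of x] by (simp add: cos_double_arctan sin_double_arctan power2_eq_square)
qed

lemma dx_kink: "dx kink x y = 4 * exp x / (1 + exp x ^ 2)"
proof -
  have "((\<lambda>t. arctan (exp t)) has_real_derivative inverse (1 + exp x ^ 2) * exp x) (at x)"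
    by (rule DERIV_chain2[OF DERIV_arctan DERIV_exp])
  then have "(Hsol has_real_derivative 4 * (inverse (1 + exp x ^ 2) * exp x)) (at x)"
    unfolding Hsol_def[abs_def] by (rule DERIV_cmult)
  then show ?thesis
    unfolding dx_def by (simp add: DERIV_imp_deriv field_simps)
qed

lemma dy_kink: "dy kink x y = 0"
  unfolding dy_def by simp

lemma Bmat_kink_i:
  fixes x y :: real
  defines "b \<equiv> complex_of_real (2 * exp x / (1 + exp x ^ 2) ^ 2)"
    and "q \<equiv> complex_of_real (exp x)"
  shows "Bmat kink \<i> x y = mat2 (- \<i> * b * q) (- \<i> * b * q ^ 2) (\<i> * b) (\<i> * b * q)"
proof -
  let ?\<beta> = "2 * exp x / (1 + exp x ^ 2) ^ 2"
  have pos: "0 < 1 + exp x ^ 2" by (rule one_plus_exp_sq_pos)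
  have c: "(1 - cos (Hsol x)) / 4 = ?\<beta> * exp x"
    using pos by (simp add: cos_Hsol field_simps) algebra
  have s1: "(sin (Hsol x) - dx kink x y) / 4 = - (?\<beta> * exp x ^ 2)"
    using pos by (simp add: sin_Hsol dx_kink divide_simps) algebra
  have s2: "(dx kink x y + sin (Hsol x)) / 4 = ?\<beta>"
    using pos by (simp add: sin_Hsol dx_kink divide_simps) algebra
  have "Bmat kink \<i> x y $ 1 $ 1 = - \<i> * of_real ((1 - cos (Hsol x)) / 4)"
    and "Bmat kink \<i> x y $ 1 $ 2 = \<i> * of_real ((sin (Hsol x) - dx kink x y) / 4)"
    and "Bmat kink \<i> x y $ 2 $ 1 = \<i> * of_real ((dx kink x y + sin (Hsol x)) / 4)"
    and "Bmat kink \<i> x y $ 2 $ 2 = \<i> * of_real ((1 - cos (Hsol x)) / 4)"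
    unfolding Bmat_def by (simp_all add: mat2_def sigma1_def sigma2_def sigma3_def dy_kink field_simps)
  then show ?thesis
    unfolding c s1 s2 b_def q_def by (simp add: vec_eq_iff forall_2 mat2_def)
qed

lemma Bmat_kink_i_nilpotent: "Bmat kink \<i> x y *v (Bmat kink \<i> x y *v z) = 0"
  unfolding Bmat_kink_i
  by (simp add: vec_eq_iff forall_2 mat2_def matrix_vector_mult_def sum_2) algebra

lemma Bmat_kink_i_kernel:
  assumes "Bmat kink \<i> x y *v z = 0"
  shows "z $ 1 = - complex_of_real (exp x) * z $ 2"
proof -
  define b where "b = complex_of_real (2 * exp x / (1 + exp x ^ 2) ^ 2)"
  define q where "q = complex_of_real (exp x)"
  have "b \<noteq> 0"
    using one_plus_exp_sq_pos[of x] unfolding b_def by (simp del: of_real_divide)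
  moreover have "(Bmat kink \<i> x y *v z) $ 2 = \<i> * b * (z $ 1 + q * z $ 2)"
    unfolding Bmat_kink_i b_def[symmetric] q_def[symmetric]
    by (simp add: mat2_def matrix_vector_mult_def sum_2 algebra_simps)
  ultimately show ?thesis
    using assms unfolding q_def by (simp add: eq_neg_iff_add_eq_0)
qed

lemma Amat_kink_i_row2:
  "(Amat kink \<i> x y *v z) $ 2 =
     complex_of_real (2 * exp x ^ 3 / (1 + exp x ^ 2) ^ 2) * z $ 1
     + complex_of_real ((1 - exp x ^ 2) ^ 2 / (2 * (1 + exp x ^ 2) ^ 2)) * z $ 2"
proof -
  have pos: "0 < 1 + exp x ^ 2" by (rule one_plus_exp_sq_pos)
  have s: "(dx kink x y - sin (Hsol x)) / 4 = 2 * exp x ^ 3 / (1 + exp x ^ 2) ^ 2"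
    using pos by (simp add: sin_Hsol dx_kink divide_simps) algebra
  have c: "(1 + cos (Hsol x)) / 4 = (1 - exp x ^ 2) ^ 2 / (2 * (1 + exp x ^ 2) ^ 2)"
    using pos by (simp add: cos_Hsol divide_simps) algebra
  have "Amat kink \<i> x y $ 2 $ 1 = of_real ((dx kink x y - sin (Hsol x)) / 4)"
    and "Amat kink \<i> x y $ 2 $ 2 = of_real ((1 + cos (Hsol x)) / 4)"
    unfolding Amat_def by (simp_all add: mat2_def sigma1_def sigma2_def sigma3_def dy_kink field_simps)
  then show ?thesis
    unfolding s c by (simp add: matrix_vector_mult_def sum_2)
qed

definition kink_profile :: "real \<Rightarrow> real" where
  "kink_profile x = exp (x / 2) / (1 + exp x ^ 2)"

lemma kink_profile_pos: "0 < kink_profile x"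
  unfolding kink_profile_def using one_plus_exp_sq_pos[of x] by simp

lemma kink_profile_deriv:
  "(kink_profile has_real_derivative (1 - 3 * exp x ^ 2) / (2 * (1 + exp x ^ 2)) * kink_profile x) (at x)"
proof -
  have pos: "0 < 1 + exp x ^ 2" by (rule one_plus_exp_sq_pos)
  have "(kink_profile has_real_derivative
      (exp (x / 2) * (1 / 2) * (1 + exp x ^ 2) - exp (x / 2) * (2 * exp x * exp x))
        / ((1 + exp x ^ 2) * (1 + exp x ^ 2))) (at x)"
    unfolding kink_profile_def[abs_def] using pos
    by (auto intro!: derivative_eq_intros simp: power2_eq_square)
  moreover have "(exp (x / 2) * (1 / 2) * (1 + exp x ^ 2) - exp (x / 2) * (2 * exp x * exp x))
        / ((1 + exp x ^ 2) * (1 + exp x ^ 2))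
      = (1 - 3 * exp x ^ 2) / (2 * (1 + exp x ^ 2)) * kink_profile x"
    unfolding kink_profile_def using pos by (simp add: divide_simps) algebra
  ultimately show ?thesis by (simp only:)
qed

lemma Phi0_i: "Phi0 x y \<i> = mat2 (of_real (exp (- x / 2))) 0 0 (of_real (exp (x / 2)))"
proof -
  have "Kf \<i> = 2 * \<i>" "Jf \<i> = 0" by (simp_all add: Kf_def Jf_def)
  moreover have "\<i> / 4 * (2 * \<i>) * of_real x = (of_real (- x / 2) :: complex)"
    and "- \<i> / 4 * (2 * \<i>) * of_real x = (of_real (x / 2) :: complex)"
    by (simp_all add: field_simps)
  ultimately show ?thesis
    unfolding Phi0_def by (simp flip: exp_of_real)
qed

lemma PhiH_i_entries:
  "PhiH x y \<i> $ 1 $ 1 = of_real ((1 + tanh x) / 2 * exp (- x / 2))"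
  "PhiH x y \<i> $ 1 $ 2 = of_real (- ((1 / cosh x) / 2 * exp (x / 2)))"
  "PhiH x y \<i> $ 2 $ 1 = of_real (- ((1 / cosh x) / 2 * exp (- x / 2)))"
  "PhiH x y \<i> $ 2 $ 2 = of_real ((1 - tanh x) / 2 * exp (x / 2))"
  unfolding PhiH_def Phi0_i
  by (simp_all add: mat2_def sigma1_def sigma3_def Id2_def matrix_matrix_mult_def sum_2 field_simps)

lemma PhiH_i_entries_kink_profile:
  "(1 + tanh x) / 2 * exp (- x / 2) = exp x * kink_profile x"
  "(1 / cosh x) / 2 * exp (x / 2) = exp x * kink_profile x"
  "(1 / cosh x) / 2 * exp (- x / 2) = kink_profile x"
  "(1 - tanh x) / 2 * exp (x / 2) = kink_profile x"
proof -
  define h where "h = exp (x / 2)"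
  have h: "h > 0" by (simp add: h_def)
  have sq: "exp x = h ^ 2" unfolding h_def by (simp add: power2_eq_square flip: exp_add)
  have inv: "exp (- x / 2) = 1 / h" unfolding h_def by (simp add: exp_minus inverse_eq_divide)
  have "exp (- x) = 1 / h ^ 2" by (simp add: exp_minus sq inverse_eq_divide)
  then have c: "cosh x = (h ^ 2 + 1 / h ^ 2) / 2"
    unfolding cosh_def sq by simp
  have "exp (- 2 * x) = 1 / exp x ^ 2"
    by (simp add: exp_minus inverse_eq_divide flip: exp_of_nat_mult)
  then have t: "tanh x = (1 - 1 / h ^ 4) / (1 + 1 / h ^ 4)"
    unfolding tanh_real_altdef by (simp add: sq flip: power_mult)
  have e: "kink_profile x = h / (1 + h ^ 4)"
    unfolding kink_profile_def h_def[symmetric] sq by (simp flip: power_mult)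
  have h4: "0 < h ^ 4" using h by simp
  then have "1 + h ^ 4 \<noteq> 0" "h ^ 4 + 1 \<noteq> 0" "h ^ 4 \<noteq> 0" by linarith+
  note facts = this h h4
  show "(1 + tanh x) / 2 * exp (- x / 2) = exp x * kink_profile x"
    unfolding t e sq inv using facts
    by (simp add: divide_simps, (intro conjI impI)?; (linarith | algebra))
  show "(1 / cosh x) / 2 * exp (x / 2) = exp x * kink_profile x"
    unfolding c e sq h_def[symmetric] using facts
    by (simp add: divide_simps, (intro conjI impI)?; (linarith | algebra))
  show "(1 / cosh x) / 2 * exp (- x / 2) = kink_profile x"
    unfolding c e inv using facts
    by (simp add: divide_simps, (intro conjI impI)?; (linarith | algebra))
  show "(1 - tanh x) / 2 * exp (x / 2) = kink_profile x"
    unfolding t e h_def[symmetric] using facts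
    by (simp add: divide_simps, (intro conjI impI)?; (linarith | algebra))
qed

lemma column_PhiH_i:
  "column 1 (PhiH x y \<i>) $ 1 = of_real (exp x * kink_profile x)"
  "column 1 (PhiH x y \<i>) $ 2 = - of_real (kink_profile x)"
  "column 2 (PhiH x y \<i>) $ 1 = - of_real (exp x * kink_profile x)"
  "column 2 (PhiH x y \<i>) $ 2 = of_real (kink_profile x)"
  unfolding column_def vec_lambda_beta PhiH_i_entries PhiH_i_entries_kink_profile by simp_all

lemma columns_PhiH_i_dependent: "column 1 (PhiH x y \<i>) + column 2 (PhiH x y \<i>) = 0"
  by (simp add: vec_eq_iff forall_2 column_PhiH_i)

lemma parallel_kink_i_vertical:
  assumes "parallel Phi kink \<i>" and "\<And>y. norm (Phi (x, y)) \<le> M"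
  shows "Phi (x, y) = Phi (x, 0)"
    and "Phi (x, 0) $ 1 = - of_real (exp x) * Phi (x, 0) $ 2"
proof -
  let ?B = "Bmat kink \<i> x 0"
  have "((\<lambda>t. Phi (x, t)) has_vector_derivative Bmat kink \<i> x t *v Phi (x, t)) (at t)" for t
    using assms(1) unfolding parallel_def by blast
  moreover have "Bmat kink \<i> x t = ?B" for t
    by (simp only: Bmat_kink_i)
  ultimately have "((\<lambda>t. Phi (x, t)) has_vector_derivative ?B *v Phi (x, t)) (at t)" for t
    by metis
  from bounded_solution_of_nilpotent_ODE[OF matrix_vector_mul_bounded_linear Bmat_kink_i_nilpotent this assms(2)]
  show "Phi (x, y) = Phi (x, 0)" and "Phi (x, 0) $ 1 = - of_real (exp x) * Phi (x, 0) $ 2"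
    using Bmat_kink_i_kernel by simp_all
qed

lemma parallel_kink_i_horizontal:
  assumes "parallel Phi kink \<i>"
    and kernel: "\<And>x. Phi (x, 0) $ 1 = - of_real (exp x) * Phi (x, 0) $ 2"
  shows "Phi (x, 0) $ 2 = of_real (2 * kink_profile x) * Phi (0, 0) $ 2"
proof -
  define k :: "real \<Rightarrow> real" where "k s = (1 - 3 * exp s ^ 2) / (2 * (1 + exp s ^ 2))" for s
  have "((\<lambda>s. Phi (s, 0) $ 2) has_vector_derivative k s *\<^sub>R Phi (s, 0) $ 2) (at s)" for s
  proof -
    have "((\<lambda>s. Phi (s, 0)) has_vector_derivative Amat kink \<i> s 0 *v Phi (s, 0)) (at s)"
      using assms(1) unfolding parallel_def by blast
    from bounded_linear.has_vector_derivative[OF bounded_linear_vec_nth this]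
    have "((\<lambda>s. Phi (s, 0) $ 2) has_vector_derivative (Amat kink \<i> s 0 *v Phi (s, 0)) $ 2) (at s)" .
    moreover have "(1 - exp s ^ 2) ^ 2 / (2 * (1 + exp s ^ 2) ^ 2) - 2 * exp s ^ 3 / (1 + exp s ^ 2) ^ 2 * exp s = k s"
      unfolding k_def using one_plus_exp_sq_pos[of s] by (simp add: divide_simps) algebra
    then have "(Amat kink \<i> s 0 *v Phi (s, 0)) $ 2 = k s *\<^sub>R Phi (s, 0) $ 2"
      unfolding Amat_kink_i_row2 kernel scaleR_conv_of_real by (simp add: algebra_simps flip: of_real_mult of_real_diff)
    ultimately show ?thesis by simp
  qed
  from solution_of_scalar_linear_ODE[OF this kink_profile_deriv[unfolded k_def[symmetric]]]
  have "Phi (x, 0) $ 2 = (kink_profile x / kink_profile 0) *\<^sub>R Phi (0, 0) $ 2"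
    using kink_profile_pos less_imp_neq by metis
  moreover have "kink_profile 0 = 1 / 2" by (simp add: kink_profile_def)
  ultimately show ?thesis
    by (simp add: scaleR_conv_of_real)
qed

lemma parallel_kink_i_eq_column:
  assumes "parallel Phi kink \<i>" and "\<And>x. \<exists>M. \<forall>y. norm (Phi (x, y)) \<le> M"
  shows "Phi (x, y) = (2 * Phi (0, 0) $ 2) *s column 2 (PhiH x y \<i>)"
proof -
  have vertical: "Phi (x, y) = Phi (x, 0)" "Phi (x, 0) $ 1 = - of_real (exp x) * Phi (x, 0) $ 2"
    for x y using assms(2)[of x] parallel_kink_i_vertical[OF assms(1)] by blast+
  have "Phi (x, 0) $ 2 = of_real (2 * kink_profile x) * Phi (0, 0) $ 2"
    using parallel_kink_i_horizontal[OF assms(1) vertical(2)] .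
  then show ?thesis
    using vertical(1)[of x y] vertical(2)[of x]
    by (simp add: vec_eq_iff forall_2 column_PhiH_i algebra_simps)
qed

theorem corollary3p9:
  fixes Phi :: "real \<times> real \<Rightarrow> complex^2"
  assumes "smooth Phi"
    and "parallel Phi (\<lambda>(x, y). Hsol x) \<i>"
    and "(\<exists>C. AE p in lborel. norm (exp (- fst p / 2) *\<^sub>R Phi p) \<le> C)
         \<or> (\<exists>C. AE p in lborel. norm (exp (fst p / 2) *\<^sub>R Phi p) \<le> C)"
  shows "(\<exists>c::complex. \<exists>j::2. \<forall>x y. Phi (x, y) = c *s column j (PhiH x y \<i>))
         \<and> (\<exists>a b::complex. (a, b) \<noteq> (0, 0) \<and>
              (\<forall>x y. a *s column 1 (PhiH x y \<i>) + b *s column 2 (PhiH x y \<i>) = 0))"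
proof -
  have "continuous_on UNIV Phi"
    using assms(1) unfolding smooth_def by (metis Ck.simps(1))
  moreover obtain s C where "AE p in lborel. norm (exp (s * fst p) *\<^sub>R Phi p) \<le> C"
    using assms(3)
  proof (elim disjE exE)
    fix C assume "AE p in lborel. norm (exp (- fst p / 2) *\<^sub>R Phi p) \<le> C"
    then have "AE p in lborel. norm (exp ((- 1 / 2) * fst p) *\<^sub>R Phi p) \<le> C" by simp
    then show thesis by (rule that)
  next
    fix C assume "AE p in lborel. norm (exp (fst p / 2) *\<^sub>R Phi p) \<le> C"
    then have "AE p in lborel. norm (exp ((1 / 2) * fst p) *\<^sub>R Phi p) \<le> C" by simp
    then show thesis by (rule that)
  qed
  ultimately have "\<exists>M. \<forall>y. norm (Phi (x, y)) \<le> M" for x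
    by (rule bounded_on_vertical_lines_if_AE_weighted_bound)
  then have "\<forall>x y. Phi (x, y) = (2 * Phi (0, 0) $ 2) *s column 2 (PhiH x y \<i>)"
    using parallel_kink_i_eq_column[OF assms(2)] by blast
  moreover have "(1::complex, 1::complex) \<noteq> (0, 0)
      \<and> (\<forall>x y. (1::complex) *s column 1 (PhiH x y \<i>) + 1 *s column 2 (PhiH x y \<i>) = 0)"
    using columns_PhiH_i_dependent by simp
  ultimately show ?thesis by blast
qed

end
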